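(* Let $A$ be a set and $T=A^*$ the free monoid on $A$. Let $Y$ be a semilattice and let $\cdot$ be a left partial action of $T$ on $Y$ satisfying axioms (A), (B), (C), which is a partially defined action and such that the restriction semigroup $M(T,Y)$ is an ultra $F$-restriction monoid. Let $X=(Y\times T)/\!\approx$ be the poset and $*$ the left action of $T$ on $X$ given by $t*[y,s]=[y,ts]$ (constructed as in the context). Then: (1) $X$ is a meet semilattice; (2) $*$ is an action of $T$ on $X$ by order-embeddings such that for every $t\in T$ the range $\{t*x\colon x\in X\}$ is an order ideal of $X$, so that the $W$-product $W(T,X)$ can be formed; (3) $M(T,Y)$ embeds into $W(T,X)$ as a $(2,1,1)$-subalgebra (i.e. there is an injective homomorphism of $(2,1,1)$-algebras $M(T,Y)\to W(T,X)$).
   Context: A restriction semigroup is an algebra $(S,\cdot,{}^*,{}^+)$ where $(S,\cdot)$ is a semigroup and the identities $xx^*=x$, $x^*y^*=y^*x^*$, $(xy^* )^*=x^*y^*$, $x^*y=y(xy)^*$, $x^+x=x$, $x^+y^+=y^+x^+$, $(x^+y)^+=x^+y^+$, $xy^+=(xy)^+x$, $(x^+)^*=x^+$, $(x^* )^+=x^*$ hold; homomorphisms preserve the product and both unary operations. If it has an identity it is a restriction monoid. $P(S)=\{x^*\colon x\in S\}=\{x^+\colon x\in S\}$ is the semilattice of projections. $\sigma$ is the least congruence identifying all projections ($a\,\sigma\, b$ iff $ea=eb$ for some $e\in P(S)$). $S$ is proper if ($a^*=b^*$ and $a\,\sigma\, b$) implies $a=b$ and ($a^+=b^+$ and $a\,\sigma\,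 b$) implies $a=b$. The natural partial order is $a\le b$ iff $a=eb$ for some $e\in P(S)$. $S$ is $F$-restriction if every $\sigma$-class has a maximum element. A left partial action of a monoid $T$ on a set $Y$ is a partial map $(t,y)\mapsto t\cdot y$ with $1\cdot y$ defined and equal to $y$, and such that if $t\cdot y$ and $s\cdot(t\cdot y)$ are defined then $(st)\cdot y$ is defined and equals $s\cdot(t\cdot y)$. Write $\varphi_t$ for the partial map $y\mapsto t\cdot y$. For $Y$ a semilattice, the axioms are: (A) $\mathrm{dom}(\varphi_t)$ and $\mathrm{ran}(\varphi_t)$ are order ideals of $Y$; (B) $\varphi_t$ is an order-isomorphism from $\mathrm{dom}(\varphi_t)$ onto $\mathrm{ran}(\varphi_t)$; (C) $\mathrm{dom}(\varphi_t)\neq\varnothing$. The reverse right partial action $\circ$ is: $y\circ t$ is defined iff $y\in\mathrm{ran}(\varphi_t)$, and then $y\circ t=\varphi_t^{-1}(y)$. Then $M(T,Y)=\{(y,t)\in Y\times T\colon y\circ t \text{ defined}\}$ with $(x,s)(y,t)=(s\cdot((x\circ s)\wedge y),st)$, $(y,t)^*=(y\circ t,1)$, $(y,t)^+=(y,1)$ is a proper restriction semigroup. For a proper restriction semigroup $S$, its underlying left partial action is the partial action of $S/\sigma$ on $E=P(S)$: $t\cdot e$ is defined iff there is $a\in t$ with $a^*\ge e$, and then $t\cdot e=(ae)^+$. A left partial action is a partially defined action if for all $s,t,x$: $(st)\cdot x$ is defined iff $t\cdot x$ and $s\cdot(t\cdot x)$ are defined. A restriction semigroup is ultra proper if it is proper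 and its underlying left partial action is a partially defined action; an ultra $F$-restriction monoid is an ultra proper $F$-restriction monoid. Construction of $X$: for $(x,s),(y,t)\in Y\times T$ put $(x,s)\to(y,t)$ if there is $p\in T$ with $s=tp$, $p\cdot x$ defined and $p\cdot x=y$. Let $\sim$ be the equivalence relation generated by $\to$, with classes $[x,s]_\sim$. On $(Y\times T)/\!\sim$ put $A\ge B$ if there are $(x,s)\in A$ and $(y,s)\in B$ with $x\ge y$; this is a preorder. Let $(x,s)\approx(y,t)$ iff $[x,s]_\sim\le[y,t]_\sim$ and $[y,t]_\sim\le[x,s]_\sim$; $X=(Y\times T)/\!\approx$ with the induced partial order and classes $[x,s]$. The action $t*[y,s]=[y,ts]$ is well defined. $W$-product: if a monoid $T$ acts on the left on a semilattice $X$ by order-embeddings with each range $t*X$ an order ideal, then $W(T,X)=\{(t*y,t)\colon y\in X,t\in T\}$ with $(t*y,t)(s*x,s)=(t*y\wedge (ts)*x,ts)$, $(t*y,t)^*=(y,1)$, $(t*y,t)^+=(t*y,1)$. *)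

theory Defs
  imports Main
begin

text \<open>The free monoid on A is 'a list with append and identity []; Y is a meet
 semilattice (type class semilattice_inf).  A partial map is 'y => 'y option.\<close>

definition order_ideal :: "'y::order set \<Rightarrow> bool" where
  "order_ideal I \<longleftrightarrow> (\<forall>x\<in>I. \<forall>y. y \<le> x \<longrightarrow> y \<in> I)"

definition pdom :: "('a list \<Rightarrow> 'y \<Rightarrow> 'y option) \<Rightarrow> 'a list \<Rightarrow> 'y set" where
  "pdom act t = {y. act t y \<noteq> None}"

definition pran :: "('a list \<Rightarrow> 'y \<Rightarrow> 'y option) \<Rightarrow> 'a list \<Rightarrow> 'y set" where
  "pran act t = {z. \<exists>y. act t y = Some z}"

definition left_partial_action :: "('a list \<Rightarrow> 'y \<Rightarrow> 'y option) \<Rightarrow> bool" where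
  "left_partial_action act \<longleftrightarrow>
     (\<forall>y. act [] y = Some y) \<and>
     (\<forall>s t y z w. act t y = Some z \<longrightarrow> act s z = Some w \<longrightarrow> act (s @ t) y = Some w)"

definition axiom_A :: "('a list \<Rightarrow> 'y::order \<Rightarrow> 'y option) \<Rightarrow> bool" where
  "axiom_A act \<longleftrightarrow> (\<forall>t. order_ideal (pdom act t) \<and> order_ideal (pran act t))"

definition axiom_B :: "('a list \<Rightarrow> 'y::order \<Rightarrow> 'y option) \<Rightarrow> bool" where
  "axiom_B act \<longleftrightarrow> (\<forall>t.
     bij_betw (\<lambda>y. the (act t y)) (pdom act t) (pran act t) \<and>
     (\<forall>x\<in>pdom act t. \<forall>y\<in>pdom act t. x \<le> y \<longleftrightarrow> the (act t x) \<le> the (act t y)))"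

definition axiom_C :: "('a list \<Rightarrow> 'y \<Rightarrow> 'y option) \<Rightarrow> bool" where
  "axiom_C act \<longleftrightarrow> (\<forall>t. pdom act t \<noteq> {})"

definition partially_defined_action :: "('a list \<Rightarrow> 'y \<Rightarrow> 'y option) \<Rightarrow> bool" where
  "partially_defined_action act \<longleftrightarrow>
     (\<forall>s t x. act (s @ t) x \<noteq> None \<longleftrightarrow> (act t x \<noteq> None \<and> act s (the (act t x)) \<noteq> None))"

definition ract :: "('a list \<Rightarrow> 'y \<Rightarrow> 'y option) \<Rightarrow> 'y \<Rightarrow> 'a list \<Rightarrow> 'y option" where
  "ract act y t = (if y \<in> pran act t then Some (THE x. act t x = Some y) else None)"

definition M_car :: "('a list \<Rightarrow> 'y \<Rightarrow> 'y option) \<Rightarrow> ('y \<times> 'a list) set" where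
  "M_car act = {(y, t). ract act y t \<noteq> None}"

definition M_mult :: "('a list \<Rightarrow> 'y::semilattice_inf \<Rightarrow> 'y option) \<Rightarrow>
    'y \<times> 'a list \<Rightarrow> 'y \<times> 'a list \<Rightarrow> 'y \<times> 'a list" where
  "M_mult act p q = (case p of (x, s) \<Rightarrow> case q of (y, t) \<Rightarrow>
      (the (act s (inf (the (ract act x s)) y)), s @ t))"

definition M_star :: "('a list \<Rightarrow> 'y \<Rightarrow> 'y option) \<Rightarrow> 'y \<times> 'a list \<Rightarrow> 'y \<times> 'a list" where
  "M_star act p = (case p of (y, t) \<Rightarrow> (the (ract act y t), []))"

definition M_plus :: "'y \<times> 'a list \<Rightarrow> 'y \<times> 'a list" where
  "M_plus p = (case p of (y, t) \<Rightarrow> (y, []))"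

definition restriction_semigroup ::
  "'b set \<Rightarrow> ('b \<Rightarrow> 'b \<Rightarrow> 'b) \<Rightarrow> ('b \<Rightarrow> 'b) \<Rightarrow> ('b \<Rightarrow> 'b) \<Rightarrow> bool" where
  "restriction_semigroup S m st pl \<longleftrightarrow>
     (\<forall>x\<in>S. \<forall>y\<in>S. m x y \<in> S) \<and> (\<forall>x\<in>S. st x \<in> S \<and> pl x \<in> S) \<and>
     (\<forall>x\<in>S. \<forall>y\<in>S. \<forall>z\<in>S. m (m x y) z = m x (m y z)) \<and>
     (\<forall>x\<in>S. m x (st x) = x) \<and>
     (\<forall>x\<in>S. \<forall>y\<in>S. m (st x) (st y) = m (st y) (st x)) \<and>
     (\<forall>x\<in>S. \<forall>y\<in>S. st (m x (st y)) = m (st x) (st y)) \<and>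
     (\<forall>x\<in>S. \<forall>y\<in>S. m (st x) y = m y (st (m x y))) \<and>
     (\<forall>x\<in>S. m (pl x) x = x) \<and>
     (\<forall>x\<in>S. \<forall>y\<in>S. m (pl x) (pl y) = m (pl y) (pl x)) \<and>
     (\<forall>x\<in>S. \<forall>y\<in>S. pl (m (pl x) y) = m (pl x) (pl y)) \<and>
     (\<forall>x\<in>S. \<forall>y\<in>S. m x (pl y) = m (pl (m x y)) x) \<and>
     (\<forall>x\<in>S. st (pl x) = pl x) \<and>
     (\<forall>x\<in>S. pl (st x) = st x)"

definition projections :: "'b set \<Rightarrow> ('b \<Rightarrow> 'b) \<Rightarrow> 'b set" where
  "projections S st = st ` S"

definition rsigma :: "'b set \<Rightarrow> ('b \<Rightarrow> 'b \<Rightarrow> 'b) \<Rightarrow> ('b \<Rightarrow> 'b) \<Rightarrow> 'b \<Rightarrow> 'b \<Rightarrow> bool" where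
  "rsigma S m st a b \<longleftrightarrow> (\<exists>e\<in>projections S st. m e a = m e b)"

definition nat_le :: "'b set \<Rightarrow> ('b \<Rightarrow> 'b \<Rightarrow> 'b) \<Rightarrow> ('b \<Rightarrow> 'b) \<Rightarrow> 'b \<Rightarrow> 'b \<Rightarrow> bool" where
  "nat_le S m st a b \<longleftrightarrow> (\<exists>e\<in>projections S st. a = m e b)"

definition proper_rs ::
  "'b set \<Rightarrow> ('b \<Rightarrow> 'b \<Rightarrow> 'b) \<Rightarrow> ('b \<Rightarrow> 'b) \<Rightarrow> ('b \<Rightarrow> 'b) \<Rightarrow> bool" where
  "proper_rs S m st pl \<longleftrightarrow>
     (\<forall>a\<in>S. \<forall>b\<in>S. st a = st b \<and> rsigma S m st a b \<longrightarrow> a = b) \<and>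
     (\<forall>a\<in>S. \<forall>b\<in>S. pl a = pl b \<and> rsigma S m st a b \<longrightarrow> a = b)"

definition F_restriction :: "'b set \<Rightarrow> ('b \<Rightarrow> 'b \<Rightarrow> 'b) \<Rightarrow> ('b \<Rightarrow> 'b) \<Rightarrow> bool" where
  "F_restriction S m st \<longleftrightarrow>
     (\<forall>a\<in>S. \<exists>u\<in>S. rsigma S m st u a \<and>
        (\<forall>b\<in>S. rsigma S m st b a \<longrightarrow> nat_le S m st b u))"

definition has_identity :: "'b set \<Rightarrow> ('b \<Rightarrow> 'b \<Rightarrow> 'b) \<Rightarrow> bool" where
  "has_identity S m \<longleftrightarrow> (\<exists>u\<in>S. \<forall>x\<in>S. m u x = x \<and> m x u = x)"

text \<open>Underlying left partial action of S/sigma on P(S); sigma-classes are represented by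
 elements a of S.\<close>
definition upa_defined ::
  "'b set \<Rightarrow> ('b \<Rightarrow> 'b \<Rightarrow> 'b) \<Rightarrow> ('b \<Rightarrow> 'b) \<Rightarrow> 'b \<Rightarrow> 'b \<Rightarrow> bool" where
  "upa_defined S m st a e \<longleftrightarrow> (\<exists>c\<in>S. rsigma S m st c a \<and> nat_le S m st e (st c))"

definition upa_val ::
  "'b set \<Rightarrow> ('b \<Rightarrow> 'b \<Rightarrow> 'b) \<Rightarrow> ('b \<Rightarrow> 'b) \<Rightarrow> ('b \<Rightarrow> 'b) \<Rightarrow> 'b \<Rightarrow> 'b \<Rightarrow> 'b" where
  "upa_val S m st pl a e =
     pl (m (SOME c. c \<in> S \<and> rsigma S m st c a \<and> nat_le S m st e (st c)) e)"

definition upa_partially_defined ::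
  "'b set \<Rightarrow> ('b \<Rightarrow> 'b \<Rightarrow> 'b) \<Rightarrow> ('b \<Rightarrow> 'b) \<Rightarrow> ('b \<Rightarrow> 'b) \<Rightarrow> bool" where
  "upa_partially_defined S m st pl \<longleftrightarrow>
     (\<forall>a\<in>S. \<forall>b\<in>S. \<forall>e\<in>projections S st.
        upa_defined S m st (m a b) e \<longleftrightarrow>
          (upa_defined S m st b e \<and> upa_defined S m st a (upa_val S m st pl b e)))"

definition ultra_F_restriction_monoid ::
  "'b set \<Rightarrow> ('b \<Rightarrow> 'b \<Rightarrow> 'b) \<Rightarrow> ('b \<Rightarrow> 'b) \<Rightarrow> ('b \<Rightarrow> 'b) \<Rightarrow> bool" where
  "ultra_F_restriction_monoid S m st pl \<longleftrightarrow>
     restriction_semigroup S m st pl \<and> has_identity S m \<and>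
     proper_rs S m st pl \<and> upa_partially_defined S m st pl \<and> F_restriction S m st"

definition arrow :: "('a list \<Rightarrow> 'y \<Rightarrow> 'y option) \<Rightarrow> 'y \<times> 'a list \<Rightarrow> 'y \<times> 'a list \<Rightarrow> bool" where
  "arrow act p q \<longleftrightarrow> (\<exists>r. snd p = snd q @ r \<and> act r (fst p) = Some (fst q))"

definition simrel :: "('a list \<Rightarrow> 'y \<Rightarrow> 'y option) \<Rightarrow> 'y \<times> 'a list \<Rightarrow> 'y \<times> 'a list \<Rightarrow> bool" where
  "simrel act = (\<lambda>p q. arrow act p q \<or> arrow act q p)\<^sup>*\<^sup>*"

definition simcls :: "('a list \<Rightarrow> 'y \<Rightarrow> 'y option) \<Rightarrow> 'y \<times> 'a list \<Rightarrow> ('y \<times> 'a list) set" where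
  "simcls act p = {q. simrel act p q}"

text \<open>cls_le act B A means A >= B: there are (x,s) in A and (y,s) in B with x >= y.\<close>
definition cls_le :: "('a list \<Rightarrow> 'y::order \<Rightarrow> 'y option) \<Rightarrow>
    ('y \<times> 'a list) set \<Rightarrow> ('y \<times> 'a list) set \<Rightarrow> bool" where
  "cls_le act B A \<longleftrightarrow> (\<exists>x y s. (x, s) \<in> A \<and> (y, s) \<in> B \<and> y \<le> x)"

definition approx :: "('a list \<Rightarrow> 'y::order \<Rightarrow> 'y option) \<Rightarrow> 'y \<times> 'a list \<Rightarrow> 'y \<times> 'a list \<Rightarrow> bool" where
  "approx act p q \<longleftrightarrow> cls_le act (simcls act p) (simcls act q) \<and> cls_le act (simcls act q) (simcls act p)"

definition Xcls :: "('a list \<Rightarrow> 'y::order \<Rightarrow> 'y option) \<Rightarrow> 'y \<times> 'a list \<Rightarrow> ('y \<times> 'a list) set" where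
  "Xcls act p = {q. approx act p q}"

definition Xset :: "('a list \<Rightarrow> 'y::order \<Rightarrow> 'y option) \<Rightarrow> ('y \<times> 'a list) set set" where
  "Xset act = range (Xcls act)"

definition Xle :: "('a list \<Rightarrow> 'y::order \<Rightarrow> 'y option) \<Rightarrow>
    ('y \<times> 'a list) set \<Rightarrow> ('y \<times> 'a list) set \<Rightarrow> bool" where
  "Xle act P Q \<longleftrightarrow> (\<exists>p\<in>P. \<exists>q\<in>Q. cls_le act (simcls act p) (simcls act q))"

definition Xact :: "('a list \<Rightarrow> 'y::order \<Rightarrow> 'y option) \<Rightarrow> 'a list \<Rightarrow>
    ('y \<times> 'a list) set \<Rightarrow> ('y \<times> 'a list) set" where
  "Xact act t P = (let p = (SOME p. p \<in> P) in Xcls act (fst p, t @ snd p))"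

definition Xmeet :: "('a list \<Rightarrow> 'y::order \<Rightarrow> 'y option) \<Rightarrow>
    ('y \<times> 'a list) set \<Rightarrow> ('y \<times> 'a list) set \<Rightarrow> ('y \<times> 'a list) set" where
  "Xmeet act P Q = (THE M. M \<in> Xset act \<and> Xle act M P \<and> Xle act M Q \<and>
      (\<forall>R\<in>Xset act. Xle act R P \<and> Xle act R Q \<longrightarrow> Xle act R M))"

type_synonym ('a, 'y) Xel = "('y \<times> 'a list) set"

definition W_car :: "('a list \<Rightarrow> 'y::order \<Rightarrow> 'y option) \<Rightarrow> (('a, 'y) Xel \<times> 'a list) set" where
  "W_car act = {(Xact act t y, t) | y t. y \<in> Xset act}"

definition W_mult :: "('a list \<Rightarrow> 'y::order \<Rightarrow> 'y option) \<Rightarrow>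
    ('a, 'y) Xel \<times> 'a list \<Rightarrow> ('a, 'y) Xel \<times> 'a list \<Rightarrow> ('a, 'y) Xel \<times> 'a list" where
  "W_mult act p q = (case p of (a, t) \<Rightarrow> case q of (b, s) \<Rightarrow>
      (Xmeet act a (Xact act (t @ s) (SOME x. x \<in> Xset act \<and> b = Xact act s x)), t @ s))"

definition W_star :: "('a list \<Rightarrow> 'y::order \<Rightarrow> 'y option) \<Rightarrow>
    ('a, 'y) Xel \<times> 'a list \<Rightarrow> ('a, 'y) Xel \<times> 'a list" where
  "W_star act p = (case p of (a, t) \<Rightarrow> (SOME y. y \<in> Xset act \<and> a = Xact act t y, []))"

definition W_plus :: "('a, 'y) Xel \<times> 'a list \<Rightarrow> ('a, 'y) Xel \<times> 'a list" where
  "W_plus p = (case p of (a, t) \<Rightarrow> (a, []))"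

end

theory Submission
  imports Defs "HOL-Library.Sublist"
begin

text \<open>Because \<open>T = A\<^sup>*\<close> is free and the action is partially defined, the arrows leaving a point
  \<open>(x, s)\<close> form a chain. Hence \<open>(x, s) \<sim> (y, t)\<close> means that the two points have a common arrow
  target, distinct points of one level \<open>Y \<times> {s}\<close> are never equivalent, and two classes can be
  compared at the level of any representative of the larger one. So \<open>\<approx>\<close> is just \<open>\<sim>\<close>, the
  preorder on classes is a partial order, and prefixing \<open>T\<close>-components gives an action of \<open>T\<close>
  by order embeddings onto ideals. A common lower bound of \<open>[a, s]\<close> and \<open>[b, s']\<close> can always be
  moved to the level of the longest common prefix of \<open>s\<close> and \<open>s'\<close>; there a largest one exists as
  soon as every \<open>dom \<phi>\<^sub>t\<close> has a greatest element, which is what the \<open>F\<close>-restriction property of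
  \<open>M(T,Y)\<close> provides. Finally \<open>(y, t) \<mapsto> ([y, 1], t)\<close> is the embedding into \<open>W(T,X)\<close>, the product
  of \<open>M(T,Y)\<close> turning into a meet computed at level \<open>1\<close>.\<close>

locale free_pd_action =
  fixes act :: "'a list \<Rightarrow> 'y::semilattice_inf \<Rightarrow> 'y option"
  assumes left_partial: "left_partial_action act"
    and ideals: "axiom_A act"
    and order_iso: "axiom_B act"
    and partially_defined: "partially_defined_action act"
begin

lemma act_Nil [simp]: "act [] y = Some y"
  using left_partial unfolding left_partial_action_def by blast

lemma act_append_eq_Some:
  "act (s @ t) x = Some w \<longleftrightarrow> (\<exists>y. act t x = Some y \<and> act s y = Some w)"
proof
  assume st: "act (s @ t) x = Some w"
  then obtain y w' where "act t x = Some y" "act s y = Some w'"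
    using partially_defined unfolding partially_defined_action_def by fastforce
  moreover from this have "act (s @ t) x = Some w'"
    using left_partial unfolding left_partial_action_def by blast
  ultimately show "\<exists>y. act t x = Some y \<and> act s y = Some w" using st by auto
next
  assume "\<exists>y. act t x = Some y \<and> act s y = Some w"
  then show "act (s @ t) x = Some w"
    using left_partial unfolding left_partial_action_def by blast
qed

lemma act_inj: "act t x = Some z \<Longrightarrow> act t x' = Some z \<Longrightarrow> x = x'"
  using order_iso unfolding axiom_B_def bij_betw_def
  by (metis (mono_tags, lifting) inj_onD mem_Collect_eq option.distinct(1) option.sel pdom_def)

lemma act_le_iff: "act t x = Some a \<Longrightarrow> act t y = Some b \<Longrightarrow> x \<le> y \<longleftrightarrow> a \<le> b"
  using order_iso unfolding axiom_B_def pdom_def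
  by (metis (mono_tags) mem_Collect_eq option.distinct(1) option.sel)

lemma act_defined_downward: "act t x = Some a \<Longrightarrow> y \<le> x \<Longrightarrow> \<exists>b. act t y = Some b"
  using ideals unfolding axiom_A_def order_ideal_def pdom_def by blast

lemma act_range_downward: "act t x = Some a \<Longrightarrow> b \<le> a \<Longrightarrow> \<exists>y. act t y = Some b"
  using ideals unfolding axiom_A_def order_ideal_def pran_def by blast

lemma ract_eq_Some_iff: "ract act y t = Some z \<longleftrightarrow> act t z = Some y"
proof
  assume "ract act y t = Some z"
  then obtain x where x: "act t x = Some y" and "(THE x. act t x = Some y) = z"
    unfolding ract_def pran_def by (auto split: if_splits)
  moreover have "(THE x. act t x = Some y) = x"
    using x act_inj by blast
  ultimately show "act t z = Some y" by simp
next
  assume z: "act t z = Some y"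
  then have "(THE x. act t x = Some y) = z"
    using act_inj by blast
  with z show "ract act y t = Some z"
    unfolding ract_def pran_def by auto
qed

lemma M_car_iff: "(y, t) \<in> M_car act \<longleftrightarrow> (\<exists>z. act t z = Some y)"
  by (simp add: M_car_def) (metis ract_eq_Some_iff)

section \<open>The equivalence generated by arrows\<close>

lemma arrow_iff [simp]: "arrow act (x, s) (z, t) \<longleftrightarrow> (\<exists>r. s = t @ r \<and> act r x = Some z)"
  by (simp add: arrow_def)

lemma arrow_refl: "arrow act p p"
  by (cases p) (auto intro: exI[of _ "[]"])

lemma arrow_trans:
  assumes "arrow act p q" and "arrow act q r"
  shows "arrow act p r"
proof -
  obtain x s y t z u where pts: "p = (x, s)" "q = (y, t)" "r = (z, u)"
    by (metis prod.exhaust)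
  with assms obtain r1 r2 where "s = t @ r1" "act r1 x = Some y" "t = u @ r2" "act r2 y = Some z"
    by (metis arrow_iff)
  then have "s = u @ r2 @ r1" "act (r2 @ r1) x = Some z"
    by (auto simp: act_append_eq_Some)
  with pts show ?thesis by auto
qed

text \<open>This is where freeness of \<open>T\<close> and partial definedness of the action enter.\<close>

lemma arrow_targets_comparable:
  assumes "arrow act q r1" and "arrow act q r2"
  shows "arrow act r1 r2 \<or> arrow act r2 r1"
proof -
  obtain x s z1 t1 z2 t2 where pts: "q = (x, s)" "r1 = (z1, t1)" "r2 = (z2, t2)"
    by (metis prod.exhaust)
  with assms obtain p1 p2 where
    p: "s = t1 @ p1" "act p1 x = Some z1" "s = t2 @ p2" "act p2 x = Some z2"
    by (metis arrow_iff)
  then have "t1 @ p1 = t2 @ p2" by simp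
  then obtain us where "t1 = t2 @ us \<and> us @ p1 = p2 \<or> t1 @ us = t2 \<and> p1 = us @ p2"
    by (auto simp: append_eq_append_conv2)
  then show ?thesis
  proof
    assume us: "t1 = t2 @ us \<and> us @ p1 = p2"
    then have "act (us @ p1) x = Some z2"
      using p by simp
    then have "act us z1 = Some z2"
      using p by (auto simp: act_append_eq_Some)
    with us pts show ?thesis by auto
  next
    assume us: "t1 @ us = t2 \<and> p1 = us @ p2"
    then have "act (us @ p2) x = Some z1"
      using p by simp
    then have "act us z2 = Some z1"
      using p by (auto simp: act_append_eq_Some)
    with us pts show ?thesis by auto
  qed
qed

lemma simrel_iff_common_target: "simrel act p q \<longleftrightarrow> (\<exists>r. arrow act p r \<and> arrow act q r)"
proof
  assume "simrel act p q"
  then show "\<exists>r. arrow act p r \<and> arrow act q r"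
    unfolding simrel_def
  proof (induction rule: rtranclp_induct)
    case base
    then show ?case using arrow_refl by blast
  next
    case (step q q')
    then obtain r where r: "arrow act p r" "arrow act q r" by blast
    from step(2) show ?case
      using arrow_targets_comparable[OF r(2)] r arrow_trans arrow_refl by blast
  qed
next
  assume "\<exists>r. arrow act p r \<and> arrow act q r"
  then obtain r where "arrow act p r" "arrow act q r" by blast
  then have "(\<lambda>p q. arrow act p q \<or> arrow act q p)\<^sup>*\<^sup>* p r"
    and "(\<lambda>p q. arrow act p q \<or> arrow act q p)\<^sup>*\<^sup>* r q"
    by (simp_all add: r_into_rtranclp)
  then show "simrel act p q"
    unfolding simrel_def by (rule rtranclp_trans)
qed

lemma simrel_refl: "simrel act p p"
  by (simp add: simrel_def)

lemma simrel_sym: "simrel act p q \<Longrightarrow> simrel act q p"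
  using simrel_iff_common_target by blast

lemma simrel_trans: "simrel act p q \<Longrightarrow> simrel act q r \<Longrightarrow> simrel act p r"
  unfolding simrel_def by (rule rtranclp_trans)

lemma arrow_imp_simrel: "arrow act p q \<Longrightarrow> simrel act p q"
  using simrel_iff_common_target arrow_refl by blast

lemma simrel_same_level: "simrel act (a, w) (b, w) \<Longrightarrow> a = b"
  unfolding simrel_iff_common_target by (auto dest: act_inj)

section \<open>The poset \<open>X\<close>\<close>

lemma arrow_lower_source:
  assumes "arrow act (x, s) (c, u)" and "y \<le> x"
  shows "\<exists>d. arrow act (y, s) (d, u) \<and> d \<le> c"
proof -
  obtain r where r: "s = u @ r" "act r x = Some c"
    using assms(1) by auto
  moreover obtain d where d: "act r y = Some d"
    using act_defined_downward[OF r(2) assms(2)] by blast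
  ultimately show ?thesis
    using act_le_iff[OF d r(2)] assms(2) by auto
qed

lemma arrow_lower_target:
  assumes "arrow act (x, s) (c, u)" and "d \<le> c"
  shows "\<exists>y. arrow act (y, s) (d, u) \<and> y \<le> x"
proof -
  obtain r where r: "s = u @ r" "act r x = Some c"
    using assms(1) by auto
  moreover obtain y where y: "act r y = Some d"
    using act_range_downward[OF r(2) assms(2)] by blast
  ultimately show ?thesis
    using act_le_iff[OF y r(2)] assms(2) by auto
qed

lemma simcls_eq: "simrel act p q \<Longrightarrow> simcls act p = simcls act q"
  unfolding simcls_def using simrel_trans simrel_sym by blast

text \<open>Two classes can always be compared at the level of any representative of the larger one:
  move both witnesses down to a common arrow target and pull the smaller one back up.\<close>

lemma cls_le_simcls_iff:
  "cls_le act (simcls act r) (simcls act (a, s)) \<longleftrightarrow> (\<exists>c. simrel act r (c, s) \<and> c \<le> a)"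
proof
  assume "cls_le act (simcls act r) (simcls act (a, s))"
  then obtain x y w where h: "simrel act (a, s) (x, w)" "simrel act r (y, w)" "y \<le> x"
    unfolding cls_le_def simcls_def by blast
  then obtain e u where eu: "arrow act (a, s) (e, u)" "arrow act (x, w) (e, u)"
    using simrel_iff_common_target by (metis prod.exhaust)
  obtain d where d: "arrow act (y, w) (d, u)" "d \<le> e"
    using arrow_lower_source[OF eu(2) h(3)] by blast
  obtain c where c: "arrow act (c, s) (d, u)" "c \<le> a"
    using arrow_lower_target[OF eu(1) d(2)] by blast
  have "simrel act r (c, s)"
    using h(2) arrow_imp_simrel[OF d(1)] simrel_sym[OF arrow_imp_simrel[OF c(1)]] simrel_trans
    by blast
  with c(2) show "\<exists>c. simrel act r (c, s) \<and> c \<le> a" by blast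
next
  assume "\<exists>c. simrel act r (c, s) \<and> c \<le> a"
  then show "cls_le act (simcls act r) (simcls act (a, s))"
    unfolding cls_le_def simcls_def using simrel_refl by blast
qed

lemma cls_le_simcls_refl: "cls_le act (simcls act p) (simcls act p)"
  by (cases p) (auto simp: cls_le_simcls_iff intro: simrel_refl)

lemma cls_le_simcls_trans:
  assumes "cls_le act (simcls act p) (simcls act q)" and "cls_le act (simcls act q) (simcls act r)"
  shows "cls_le act (simcls act p) (simcls act r)"
proof -
  obtain b v c w where qr: "q = (b, v)" "r = (c, w)"
    by (metis prod.exhaust)
  obtain y where y: "simrel act (b, v) (y, w)" "y \<le> c"
    using assms(2) qr cls_le_simcls_iff by blast
  then obtain x where "simrel act p (x, w)" "x \<le> y"
    using assms(1) qr simcls_eq[OF y(1)] cls_le_simcls_iff by auto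
  with y(2) qr show ?thesis
    using cls_le_simcls_iff order_trans by blast
qed

lemma cls_le_simcls_antisym:
  assumes "cls_le act (simcls act p) (simcls act q)" and "cls_le act (simcls act q) (simcls act p)"
  shows "simrel act p q"
proof -
  obtain b v where q: "q = (b, v)"
    by (metis prod.exhaust)
  obtain x where x: "simrel act p (x, v)" "x \<le> b"
    using assms(1) q cls_le_simcls_iff by blast
  then obtain y where y: "simrel act q (y, v)" "y \<le> x"
    using assms(2) simcls_eq[OF x(1)] cls_le_simcls_iff by auto
  then have "y = b"
    using q simrel_same_level simrel_sym by blast
  with x y q show ?thesis by simp
qed

lemma approx_iff_simrel: "approx act p q \<longleftrightarrow> simrel act p q"
proof
  assume "simrel act p q"
  then show "approx act p q"
    unfolding approx_def simcls_eq[OF \<open>simrel act p q\<close>] by (simp add: cls_le_simcls_refl)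
qed (simp add: approx_def cls_le_simcls_antisym)

lemma Xcls_eq_simcls: "Xcls act p = simcls act p"
  unfolding Xcls_def simcls_def approx_iff_simrel ..

lemma Xcls_eq_iff: "Xcls act p = Xcls act q \<longleftrightarrow> simrel act p q"
  unfolding Xcls_eq_simcls simcls_def using simrel_refl simrel_sym simrel_trans by blast

lemma Xcls_in_Xset [simp]: "Xcls act p \<in> Xset act"
  unfolding Xset_def by simp

lemma XsetE:
  assumes "P \<in> Xset act"
  obtains a s where "P = Xcls act (a, s)"
  using assms unfolding Xset_def by auto

lemma Xle_Xcls_iff_cls_le:
  "Xle act (Xcls act p) (Xcls act q) \<longleftrightarrow> cls_le act (simcls act p) (simcls act q)"
  unfolding Xle_def Xcls_eq_simcls
  by (metis mem_Collect_eq simcls_def simcls_eq simrel_refl)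

lemma Xle_Xcls_iff:
  "Xle act (Xcls act r) (Xcls act (a, s)) \<longleftrightarrow> (\<exists>c. simrel act r (c, s) \<and> c \<le> a)"
  unfolding Xle_Xcls_iff_cls_le cls_le_simcls_iff ..

lemma Xle_refl: "P \<in> Xset act \<Longrightarrow> Xle act P P"
  by (elim XsetE) (simp add: Xle_Xcls_iff_cls_le cls_le_simcls_refl)

lemma Xle_trans:
  assumes "P \<in> Xset act" "Q \<in> Xset act" "R \<in> Xset act" and "Xle act P Q" "Xle act Q R"
  shows "Xle act P R"
  using assms by (elim XsetE) (simp add: Xle_Xcls_iff_cls_le cls_le_simcls_trans)

lemma Xle_antisym:
  assumes "P \<in> Xset act" "Q \<in> Xset act" and "Xle act P Q" "Xle act Q P"
  shows "P = Q"
  using assms by (elim XsetE) (simp add: Xle_Xcls_iff_cls_le Xcls_eq_iff cls_le_simcls_antisym)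

section \<open>The action of \<open>T\<close> on \<open>X\<close>\<close>

lemma simrel_append_iff: "simrel act (x, t @ w) (x', t @ w') \<longleftrightarrow> simrel act (x, w) (x', w')"
proof
  assume "simrel act (x, t @ w) (x', t @ w')"
  then obtain e v where "arrow act (x, t @ w) (e, v)" "arrow act (x', t @ w') (e, v)"
    using simrel_iff_common_target by (metis prod.exhaust)
  then obtain r r' where
    r: "t @ w = v @ r" "act r x = Some e" "t @ w' = v @ r'" "act r' x' = Some e"
    by auto
  obtain us where "t = v @ us \<and> us @ w = r \<or> t @ us = v \<and> w = us @ r"
    using r(1) by (auto simp: append_eq_append_conv2)
  then show "simrel act (x, w) (x', w')"
  proof
    assume us: "t = v @ us \<and> us @ w = r"
    then have "act (us @ w) x = Some e" "act (us @ w') x' = Some e"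
      using r by auto
    then obtain g g' where g: "act w x = Some g" "act us g = Some e"
      and g': "act w' x' = Some g'" "act us g' = Some e"
      unfolding act_append_eq_Some by blast
    then have "g = g'"
      using act_inj by blast
    with g g' have "arrow act (x, w) (g, [])" "arrow act (x', w') (g, [])"
      by auto
    then show ?thesis
      using simrel_iff_common_target by blast
  next
    assume us: "t @ us = v \<and> w = us @ r"
    then have "arrow act (x, w) (e, us)" "arrow act (x', w') (e, us)"
      using r by auto
    then show ?thesis
      using simrel_iff_common_target by blast
  qed
next
  assume "simrel act (x, w) (x', w')"
  then obtain e v where "arrow act (x, w) (e, v)" "arrow act (x', w') (e, v)"
    using simrel_iff_common_target by (metis prod.exhaust)
  then have "arrow act (x, t @ w) (e, t @ v)" "arrow act (x', t @ w') (e, t @ v)"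
    by auto
  then show "simrel act (x, t @ w) (x', t @ w')"
    using simrel_iff_common_target by blast
qed

lemma Xact_Xcls: "Xact act t (Xcls act (x, w)) = Xcls act (x, t @ w)"
proof -
  have "(SOME p. p \<in> Xcls act (x, w)) \<in> Xcls act (x, w)"
    by (rule someI[of _ "(x, w)"]) (simp add: Xcls_eq_simcls simcls_def simrel_refl)
  then obtain y v where yv: "(SOME p. p \<in> Xcls act (x, w)) = (y, v)" "simrel act (x, w) (y, v)"
    unfolding Xcls_eq_simcls simcls_def by (metis mem_Collect_eq prod.exhaust)
  then have "simrel act (x, t @ w) (y, t @ v)"
    using simrel_append_iff by blast
  then show ?thesis
    unfolding Xact_def Let_def yv(1) by (simp add: Xcls_eq_iff simrel_sym)
qed

lemma Xact_in_Xset: "P \<in> Xset act \<Longrightarrow> Xact act t P \<in> Xset act"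
  by (elim XsetE) (simp add: Xact_Xcls)

lemma Xact_Nil: "P \<in> Xset act \<Longrightarrow> Xact act [] P = P"
  by (elim XsetE) (simp add: Xact_Xcls)

lemma Xact_append: "P \<in> Xset act \<Longrightarrow> Xact act (s @ t) P = Xact act s (Xact act t P)"
  by (elim XsetE) (simp add: Xact_Xcls)

lemma Xle_Xact_iff:
  assumes "P \<in> Xset act" and "Q \<in> Xset act"
  shows "Xle act (Xact act t P) (Xact act t Q) \<longleftrightarrow> Xle act P Q"
proof -
  obtain a s where "P = Xcls act (a, s)"
    using assms(1) by (rule XsetE)
  moreover obtain b w where "Q = Xcls act (b, w)"
    using assms(2) by (rule XsetE)
  ultimately show ?thesis
    by (simp add: Xact_Xcls Xle_Xcls_iff simrel_append_iff)
qed

lemma Xact_inj: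
  assumes "P \<in> Xset act" "Q \<in> Xset act" and "Xact act t P = Xact act t Q"
  shows "P = Q"
proof -
  have "Xle act (Xact act t P) (Xact act t Q)" "Xle act (Xact act t Q) (Xact act t P)"
    using assms Xact_in_Xset Xle_refl by simp_all
  then show ?thesis
    using assms(1,2) Xle_Xact_iff Xle_antisym by blast
qed

lemma Xle_Xact_imp_image:
  assumes "P \<in> Xset act" and "Q \<in> Xset act" and "Xle act P (Xact act t Q)"
  shows "\<exists>R\<in>Xset act. P = Xact act t R"
proof -
  obtain p where p: "P = Xcls act p"
    using assms(1) unfolding Xset_def by blast
  obtain b w where q: "Q = Xcls act (b, w)"
    using assms(2) by (rule XsetE)
  have "Xle act (Xcls act p) (Xcls act (b, t @ w))"
    using assms(3) p q by (simp add: Xact_Xcls)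
  then obtain c where "simrel act p (c, t @ w)"
    unfolding Xle_Xcls_iff by blast
  then have "P = Xact act t (Xcls act (c, w))"
    using p by (simp add: Xact_Xcls Xcls_eq_iff)
  then show ?thesis
    using Xcls_in_Xset by blast
qed

section \<open>Embedding \<open>M(T,Y)\<close> into \<open>W(T,X)\<close>\<close>

lemma simrel_Nil_iff: "simrel act (c, s) (d, []) \<longleftrightarrow> act s c = Some d"
proof
  assume "simrel act (c, s) (d, [])"
  then obtain e w where "arrow act (c, s) (e, w)" "arrow act (d, []) (e, w)"
    using simrel_iff_common_target by (metis prod.exhaust)
  then show "act s c = Some d"
    by auto
qed (simp add: arrow_imp_simrel)

lemma Xact_Xcls_Nil: "act t y0 = Some y \<Longrightarrow> Xact act t (Xcls act (y0, [])) = Xcls act (y, [])"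
  by (simp add: Xact_Xcls Xcls_eq_iff simrel_Nil_iff)

lemma Xact_preimage_Xcls_Nil:
  assumes "act t y0 = Some y"
  shows "(SOME Z. Z \<in> Xset act \<and> Xcls act (y, []) = Xact act t Z) = Xcls act (y0, [])"
proof (rule some_equality)
  show "Xcls act (y0, []) \<in> Xset act \<and> Xcls act (y, []) = Xact act t (Xcls act (y0, []))"
    using Xact_Xcls_Nil[OF assms] by simp
next
  fix Z
  assume "Z \<in> Xset act \<and> Xcls act (y, []) = Xact act t Z"
  then show "Z = Xcls act (y0, [])"
    using Xact_Xcls_Nil[OF assms] Xact_inj Xcls_in_Xset by metis
qed

lemma Xmeet_eqI:
  assumes "M \<in> Xset act" and "Xle act M P" and "Xle act M Q"
    and greatest: "\<And>R. R \<in> Xset act \<Longrightarrow> Xle act R P \<Longrightarrow> Xle act R Q \<Longrightarrow> Xle act R M"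
  shows "Xmeet act P Q = M"
  unfolding Xmeet_def
proof (rule the_equality)
  show "M \<in> Xset act \<and> Xle act M P \<and> Xle act M Q \<and>
      (\<forall>R\<in>Xset act. Xle act R P \<and> Xle act R Q \<longrightarrow> Xle act R M)"
    using assms by blast
next
  fix M'
  assume "M' \<in> Xset act \<and> Xle act M' P \<and> Xle act M' Q \<and>
      (\<forall>R\<in>Xset act. Xle act R P \<and> Xle act R Q \<longrightarrow> Xle act R M')"
  then show "M' = M"
    using assms Xle_antisym by blast
qed

lemma Xmeet_Xcls_Nil:
  assumes x0: "act s x0 = Some x" and v: "act s (inf x0 y) = Some v"
  shows "Xmeet act (Xcls act (x, [])) (Xcls act (y, s)) = Xcls act (v, [])"
proof (rule Xmeet_eqI)
  have "v \<le> x"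
    using act_le_iff[OF v x0] by simp
  then show "Xle act (Xcls act (v, [])) (Xcls act (x, []))"
    unfolding Xle_Xcls_iff using simrel_refl by blast
  have "simrel act (v, []) (inf x0 y, s)"
    using v by (simp add: simrel_Nil_iff simrel_sym)
  then show "Xle act (Xcls act (v, [])) (Xcls act (y, s))"
    unfolding Xle_Xcls_iff by (blast intro: inf.cobounded2)
next
  fix R
  assume R: "R \<in> Xset act" "Xle act R (Xcls act (x, []))" "Xle act R (Xcls act (y, s))"
  obtain r where r: "R = Xcls act r"
    using R(1) unfolding Xset_def by blast
  obtain c1 where c1: "simrel act r (c1, [])" "c1 \<le> x"
    using R(2) unfolding r Xle_Xcls_iff by blast
  obtain c2 where c2: "simrel act r (c2, s)" "c2 \<le> y"
    using R(3) unfolding r Xle_Xcls_iff by blast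
  have "simrel act (c2, s) (c1, [])"
    using c1(1) c2(1) simrel_sym simrel_trans by blast
  then have c21: "act s c2 = Some c1"
    by (simp add: simrel_Nil_iff)
  then have "c2 \<le> inf x0 y"
    using act_le_iff[OF c21 x0] c1(2) c2(2) by simp
  then have "c1 \<le> v"
    using act_le_iff[OF c21 v] by simp
  then show "Xle act R (Xcls act (v, []))"
    unfolding r Xle_Xcls_iff using c1(1) by blast
qed simp

end

definition M_to_W ::
    "('a list \<Rightarrow> 'y::order \<Rightarrow> 'y option) \<Rightarrow> 'y \<times> 'a list \<Rightarrow> ('a, 'y) Xel \<times> 'a list"
  where "M_to_W act p = (Xcls act (fst p, []), snd p)"

context free_pd_action
begin

lemma inj_on_M_to_W: "inj_on (M_to_W act) (M_car act)"
proof (rule inj_onI)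
  fix p q
  assume "M_to_W act p = M_to_W act q"
  then have "simrel act (fst p, []) (fst q, [])" "snd p = snd q"
    unfolding M_to_W_def by (simp_all add: Xcls_eq_iff)
  then show "p = q"
    using simrel_same_level by (metis prod.expand)
qed

lemma M_to_W_image_subset: "M_to_W act ` M_car act \<subseteq> W_car act"
proof
  fix z
  assume "z \<in> M_to_W act ` M_car act"
  then obtain y t where "z = M_to_W act (y, t)" "(y, t) \<in> M_car act"
    by auto
  moreover from this obtain y0 where "act t y0 = Some y"
    using M_car_iff by blast
  ultimately have "z = (Xact act t (Xcls act (y0, [])), t)"
    unfolding M_to_W_def by (simp add: Xact_Xcls_Nil)
  then show "z \<in> W_car act"
    unfolding W_car_def using Xcls_in_Xset by blast
qed

lemma M_to_W_plus: "M_to_W act (M_plus p) = W_plus (M_to_W act p)"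
  by (simp add: M_to_W_def M_plus_def W_plus_def split: prod.split)

lemma M_to_W_star:
  assumes "p \<in> M_car act"
  shows "M_to_W act (M_star act p) = W_star act (M_to_W act p)"
proof -
  obtain y t y0 where p: "p = (y, t)" and y0: "act t y0 = Some y"
    using assms M_car_iff by (metis prod.exhaust)
  then have "M_star act p = (y0, [])"
    unfolding M_star_def using ract_eq_Some_iff[of y t y0] by simp
  then show ?thesis
    unfolding M_to_W_def W_star_def p by (simp add: Xact_preimage_Xcls_Nil[OF y0])
qed

lemma M_to_W_mult:
  assumes "p \<in> M_car act" and "q \<in> M_car act"
  shows "M_to_W act (M_mult act p q) = W_mult act (M_to_W act p) (M_to_W act q)"
proof -
  obtain x s x0 where p: "p = (x, s)" and x0: "act s x0 = Some x"
    using assms(1) M_car_iff by (metis prod.exhaust)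
  obtain y t y0 where q: "q = (y, t)" and y0: "act t y0 = Some y"
    using assms(2) M_car_iff by (metis prod.exhaust)
  obtain v where v: "act s (inf x0 y) = Some v"
    using act_defined_downward[OF x0 inf.cobounded1] by blast
  have "M_to_W act (M_mult act p q) = (Xcls act (v, []), s @ t)"
    unfolding M_to_W_def M_mult_def p q using ract_eq_Some_iff[of x s x0] x0 v by simp
  moreover have "Xact act (s @ t) (Xcls act (y0, [])) = Xcls act (y, s)"
    using y0 by (simp add: Xact_Xcls Xcls_eq_iff arrow_imp_simrel)
  then have "W_mult act (M_to_W act p) (M_to_W act q) =
      (Xmeet act (Xcls act (x, [])) (Xcls act (y, s)), s @ t)"
    unfolding M_to_W_def W_mult_def p q by (simp add: Xact_preimage_Xcls_Nil[OF y0])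
  ultimately show ?thesis
    using Xmeet_Xcls_Nil[OF x0 v] by simp
qed

section \<open>Meets in \<open>X\<close>\<close>

lemma projections_M_car: "projections (M_car act) (M_star act) = range (\<lambda>k. (k, []))"
  unfolding projections_def
proof
  show "M_star act ` M_car act \<subseteq> range (\<lambda>k. (k, []))"
    unfolding M_star_def by (auto split: prod.splits)
  have "(k, []) = M_star act (k, []) \<and> (k, []) \<in> M_car act" for k
    unfolding M_star_def using ract_eq_Some_iff[of k "[]" k] by (simp add: M_car_iff)
  then show "range (\<lambda>k. (k, [])) \<subseteq> M_star act ` M_car act"
    by blast
qed

lemma M_mult_projection: "M_mult act (k, []) (w, t) = (inf k w, t)"
  unfolding M_mult_def using ract_eq_Some_iff[of k "[]" k] by simp

lemma rsigma_M_iff: "rsigma (M_car act) (M_mult act) (M_star act) (w, t) (w', t') \<longleftrightarrow> t = t'"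
proof
  assume "t = t'"
  then have "M_mult act (inf w w', []) (w, t) = M_mult act (inf w w', []) (w', t')"
    by (simp add: M_mult_projection inf_aci)
  then show "rsigma (M_car act) (M_mult act) (M_star act) (w, t) (w', t')"
    unfolding rsigma_def projections_M_car by blast
qed (auto simp: rsigma_def projections_M_car M_mult_projection)

lemma nat_le_M_iff: "nat_le (M_car act) (M_mult act) (M_star act) (w, t) (w', t') \<longleftrightarrow> t = t' \<and> w \<le> w'"
  unfolding nat_le_def projections_M_car by (auto simp: M_mult_projection intro: inf.absorb1[symmetric])

text \<open>The maximum of the \<open>\<sigma>\<close>-class \<open>{(z, t) | z. z \<in> ran \<phi>\<^sub>t}\<close> of \<open>M(T,Y)\<close> is the image
  of the greatest element of \<open>dom \<phi>\<^sub>t\<close>.\<close>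

lemma pdom_has_greatest_if_F_restriction:
  assumes "F_restriction (M_car act) (M_mult act) (M_star act)" and "axiom_C act"
  shows "\<exists>m\<in>pdom act t. \<forall>x\<in>pdom act t. x \<le> m"
proof -
  obtain x0 z0 where "act t x0 = Some z0"
    using assms(2) unfolding axiom_C_def pdom_def by blast
  then have "(z0, t) \<in> M_car act"
    using M_car_iff by blast
  then obtain mu tu where "(mu, tu) \<in> M_car act" and "tu = t"
    and greatest: "\<forall>b\<in>M_car act. rsigma (M_car act) (M_mult act) (M_star act) b (z0, t)
        \<longrightarrow> nat_le (M_car act) (M_mult act) (M_star act) b (mu, tu)"
    using assms(1) unfolding F_restriction_def by (force simp: rsigma_M_iff)
  then obtain m where m: "act t m = Some mu"
    using M_car_iff by blast
  have "x \<le> m" if x: "x \<in> pdom act t" for x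
  proof -
    obtain z where z: "act t x = Some z"
      using x unfolding pdom_def by auto
    then have "(z, t) \<in> M_car act"
      using M_car_iff by blast
    then have "nat_le (M_car act) (M_mult act) (M_star act) (z, t) (mu, tu)"
      using greatest rsigma_M_iff by blast
    then have "z \<le> mu"
      by (simp add: nat_le_M_iff)
    then show ?thesis
      using act_le_iff[OF z m] by simp
  qed
  moreover have "m \<in> pdom act t"
    using m unfolding pdom_def by simp
  ultimately show ?thesis
    by blast
qed

end

locale free_pd_action_bounded = free_pd_action +
  assumes pdom_has_greatest: "\<exists>m\<in>pdom act t. \<forall>x\<in>pdom act t. x \<le> m"
begin

lemma Xle_Xcls_append:
  assumes x: "act q x = Some \<alpha>" and "x \<le> a" and "\<gamma> \<le> \<alpha>"
  shows "Xle act (Xcls act (\<gamma>, u)) (Xcls act (a, u @ q))"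
proof -
  obtain z where z: "act q z = Some \<gamma>"
    using act_range_downward[OF x \<open>\<gamma> \<le> \<alpha>\<close>] by blast
  then have "z \<le> a"
    using act_le_iff[OF z x] assms(2,3) by simp
  moreover have "simrel act (\<gamma>, u) (z, u @ q)"
    using z by (simp add: simrel_sym arrow_imp_simrel)
  ultimately show ?thesis
    unfolding Xle_Xcls_iff by blast
qed

lemma simrel_at_longest_common_prefix:
  assumes "simrel act (c1, sa) (c2, sb)" and u: "u = longest_common_prefix sa sb"
    and q1: "sa = u @ q1" and q2: "sb = u @ q2"
  shows "\<exists>g. act q1 c1 = Some g \<and> act q2 c2 = Some g"
proof -
  obtain e v where "arrow act (c1, sa) (e, v)" "arrow act (c2, sb) (e, v)"
    using assms(1) simrel_iff_common_target by (metis prod.exhaust)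
  then obtain w1 w2 where
    w: "sa = v @ w1" "act w1 c1 = Some e" "sb = v @ w2" "act w2 c2 = Some e"
    by auto
  then have "prefix v u"
    unfolding u by (simp add: longest_common_prefix_max_prefix)
  then obtain w where "u = v @ w"
    by (rule prefixE)
  then have "act (w @ q1) c1 = Some e" "act (w @ q2) c2 = Some e"
    using w q1 q2 by simp_all
  then obtain g1 g2 where "act q1 c1 = Some g1" "act w g1 = Some e"
    "act q2 c2 = Some g2" "act w g2 = Some e"
    unfolding act_append_eq_Some by blast
  then show ?thesis
    using act_inj by blast
qed

text \<open>Every common lower bound of \<open>[a, sa]\<close> and \<open>[b, sb]\<close> is represented at the level \<open>u\<close> of the
  longest common prefix, and there \<open>\<alpha> \<sqinter> \<beta>\<close> is the largest candidate, where \<open>\<alpha>\<close> and \<open>\<beta>\<close> carry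
  \<open>a\<close> and \<open>b\<close>, cut down to the greatest elements of the relevant domains, to level \<open>u\<close>.\<close>

lemma Xset_has_meet:
  assumes "P \<in> Xset act" and "Q \<in> Xset act"
  shows "\<exists>M\<in>Xset act. Xle act M P \<and> Xle act M Q \<and>
           (\<forall>R\<in>Xset act. Xle act R P \<and> Xle act R Q \<longrightarrow> Xle act R M)"
proof -
  obtain a sa where P: "P = Xcls act (a, sa)"
    using assms(1) by (rule XsetE)
  obtain b sb where Q: "Q = Xcls act (b, sb)"
    using assms(2) by (rule XsetE)
  define u where "u = longest_common_prefix sa sb"
  obtain q1 where q1: "sa = u @ q1"
    using longest_common_prefix_prefix1 prefixE unfolding u_def by metis
  obtain q2 where q2: "sb = u @ q2"
    using longest_common_prefix_prefix2 prefixE unfolding u_def by metis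
  obtain m1 where m1: "act q1 m1 \<noteq> None" "\<And>x. act q1 x \<noteq> None \<Longrightarrow> x \<le> m1"
    using pdom_has_greatest[of q1] unfolding pdom_def by blast
  obtain m2 where m2: "act q2 m2 \<noteq> None" "\<And>x. act q2 x \<noteq> None \<Longrightarrow> x \<le> m2"
    using pdom_has_greatest[of q2] unfolding pdom_def by blast
  obtain \<alpha> where \<alpha>: "act q1 (inf a m1) = Some \<alpha>"
    using m1(1) act_defined_downward inf.cobounded2 by (metis not_None_eq)
  obtain \<beta> where \<beta>: "act q2 (inf b m2) = Some \<beta>"
    using m2(1) act_defined_downward inf.cobounded2 by (metis not_None_eq)
  define M where "M = Xcls act (inf \<alpha> \<beta>, u)"
  have "Xle act M P"
    unfolding M_def P q1 by (rule Xle_Xcls_append[OF \<alpha>]) simp_all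
  moreover have "Xle act M Q"
    unfolding M_def Q q2 by (rule Xle_Xcls_append[OF \<beta>]) simp_all
  moreover have "Xle act R M" if R: "R \<in> Xset act" "Xle act R P" "Xle act R Q" for R
  proof -
    obtain r where r: "R = Xcls act r"
      using R(1) unfolding Xset_def by blast
    obtain c1 where c1: "simrel act r (c1, sa)" "c1 \<le> a"
      using R(2) unfolding r P Xle_Xcls_iff by blast
    obtain c2 where c2: "simrel act r (c2, sb)" "c2 \<le> b"
      using R(3) unfolding r Q Xle_Xcls_iff by blast
    have "simrel act (c1, sa) (c2, sb)"
      using c1(1) c2(1) simrel_sym simrel_trans by blast
    then obtain g where g1: "act q1 c1 = Some g" and g2: "act q2 c2 = Some g"
      using simrel_at_longest_common_prefix u_def q1 q2 by blast
    have "c1 \<le> inf a m1"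
      using c1(2) m1(2) g1 by simp
    then have "g \<le> \<alpha>"
      using act_le_iff[OF g1 \<alpha>] by simp
    moreover have "c2 \<le> inf b m2"
      using c2(2) m2(2) g2 by simp
    then have "g \<le> \<beta>"
      using act_le_iff[OF g2 \<beta>] by simp
    moreover have "simrel act r (g, u)"
      using c1(1) g1 q1 simrel_trans arrow_imp_simrel by auto
    ultimately show ?thesis
      unfolding r M_def Xle_Xcls_iff by auto
  qed
  ultimately show ?thesis
    unfolding M_def using Xcls_in_Xset by blast
qed

end

theorem theorem5p1:
  fixes act :: "'a list \<Rightarrow> 'y::semilattice_inf \<Rightarrow> 'y option"
  assumes "left_partial_action act"
    and "axiom_A act" and "axiom_B act" and "axiom_C act"
    and "partially_defined_action act"
    and "ultra_F_restriction_monoid (M_car act) (M_mult act) (M_star act) M_plus"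
  shows
    "((\<forall>P\<in>Xset act. Xle act P P) \<and>
      (\<forall>P\<in>Xset act. \<forall>Q\<in>Xset act. Xle act P Q \<and> Xle act Q P \<longrightarrow> P = Q) \<and>
      (\<forall>P\<in>Xset act. \<forall>Q\<in>Xset act. \<forall>R\<in>Xset act. Xle act P Q \<and> Xle act Q R \<longrightarrow> Xle act P R) \<and>
      (\<forall>P\<in>Xset act. \<forall>Q\<in>Xset act. \<exists>M\<in>Xset act. Xle act M P \<and> Xle act M Q \<and>
          (\<forall>R\<in>Xset act. Xle act R P \<and> Xle act R Q \<longrightarrow> Xle act R M)))
   \<and>
     ((\<forall>t. \<forall>P\<in>Xset act. Xact act t P \<in> Xset act) \<and>
      (\<forall>P\<in>Xset act. Xact act [] P = P) \<and>
      (\<forall>s t. \<forall>P\<in>Xset act. Xact act (s @ t) P = Xact act s (Xact act t P)) \<and>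
      (\<forall>t. \<forall>P\<in>Xset act. \<forall>Q\<in>Xset act. Xle act P Q \<longleftrightarrow> Xle act (Xact act t P) (Xact act t Q)) \<and>
      (\<forall>t. \<forall>Q\<in>Xset act. \<forall>P\<in>Xset act. Xle act P (Xact act t Q) \<longrightarrow>
          (\<exists>R\<in>Xset act. P = Xact act t R)))
   \<and>
     (\<exists>f. inj_on f (M_car act) \<and> f ` M_car act \<subseteq> W_car act \<and>
        (\<forall>p\<in>M_car act. \<forall>q\<in>M_car act. f (M_mult act p q) = W_mult act (f p) (f q)) \<and>
        (\<forall>p\<in>M_car act. f (M_star act p) = W_star act (f p)) \<and>
        (\<forall>p\<in>M_car act. f (M_plus p) = W_plus (f p)))"
proof -
  interpret free_pd_action act
    using assms by unfold_locales
  have "F_restriction (M_car act) (M_mult act) (M_star act)"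
    using assms(6) unfolding ultra_F_restriction_monoid_def by blast
  then interpret free_pd_action_bounded act
    using assms(4) pdom_has_greatest_if_F_restriction by unfold_locales
  show ?thesis
  proof (intro conjI ballI allI impI exI[of _ "M_to_W act"])
    show "P = Q" if "P \<in> Xset act" "Q \<in> Xset act" "Xle act P Q \<and> Xle act Q P" for P Q
      using that Xle_antisym by blast
    show "Xle act P R"
      if "P \<in> Xset act" "Q \<in> Xset act" "R \<in> Xset act" "Xle act P Q \<and> Xle act Q R" for P Q R
      using that Xle_trans by blast
    show "\<exists>M\<in>Xset act. Xle act M P \<and> Xle act M Q \<and>
        (\<forall>R\<in>Xset act. Xle act R P \<and> Xle act R Q \<longrightarrow> Xle act R M)"
      if "P \<in> Xset act" "Q \<in> Xset act" for P Q
      using that by (rule Xset_has_meet)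
  qed (simp_all add: Xle_refl Xact_in_Xset Xact_Nil Xact_append Xle_Xact_iff Xle_Xact_imp_image
      inj_on_M_to_W M_to_W_image_subset M_to_W_mult M_to_W_star M_to_W_plus)
qed

end
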